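(* Let $A,B,C$ be finite sets, let $\varphi(x,y)$ be a condensation FO formula over $A$, and let $f\colon A^{\mathrm{ord}+}\to B$ and $g\colon B^{\mathrm{ord}}\to C$ be FO-definable maps. Then the map $A^{\mathrm{ord}}\to C$ sending $u$ to $g(w_u)$, where $w_u\in B^{\mathrm{ord}}$ is the word with domain $\mathrm{dom}(\hat\varphi(u))$ whose letter at position $i$ is $f(\hat\varphi(u)_i)$, is FO-definable.
   Context: Countable ordinal words: for a set $\Sigma$, a countable ordinal word over $\Sigma$ is a map $w\colon\alpha\to\Sigma$ with $\alpha$ a countable ordinal (its domain $\mathrm{dom}(w)$); $\Sigma^{\mathrm{ord}}$ is the set of all of them, $\Sigma^{\mathrm{ord}+}$ the nonempty ones. First-order logic: over a finite alphabet $\Sigma$, FO formulas are built from atoms $x<y$ and $a(x)$ ($a\in\Sigma$) by Boolean connectives and quantification over positions, interpreted on countable ordinal words. A language is FO-definable if it is the set of words satisfying some FO sentence. For $L\subseteq\Sigma^{\mathrm{ord}}$ and a finite set $X$, a map $f\colon L\to X$ is FO-definable if every preimage $f^{-1}(x)$, $x\in X$, is an FO-definable language. Condensations: a condensation of a countable ordinal $\alpha$ is an equivalence relation on $\alpha$ with convex classes; the quotient is again a countable ordinal. A condensation formula is an FO formula $\varphi(x,y)$ such that for every word $w\in\Sigma^{\mathrm{ord}}$ the relation $\{(\iota,\kappa): w,[x\mapsto\iota,y\mapsto\kappa]\models\varphi\}$ is a condensation of $\mathrm{dom}(w)$. It induces $\hat\varphi\colon\Sigma^{\mathrm{ord}}\to(\Sigma^{\mathrm{ord}+})^{\mathrm{ord}}$: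 $\hat\varphi(u)$ has domain the ordered set of classes, and its letter at class $I$ is the subword $(u_\iota)_{\iota\in I}$. *)

theory Defs
  imports Main
begin

text \<open>Every countable ordinal is order-isomorphic to a
well-order on a subset of nat, so a countable ordinal word over alphabet 'a is
represented by a pair (r, w): r is a (reflexive) well-order on a set of naturals
(its field is the domain) and w gives the letter at each position of Field r.\<close>

type_synonym 'a word = "nat rel \<times> (nat \<Rightarrow> 'a)"

definition is_word :: "'a word \<Rightarrow> bool" where
  "is_word u \<longleftrightarrow> Well_order (fst u)"

definition dom_w :: "'a word \<Rightarrow> nat set" where
  "dom_w u = Field (fst u)"

definition words :: "'a word set" where
  "words = {u. is_word u}"

definition words_ne :: "'a word set" where
  "words_ne = {u. is_word u \<and> dom_w u \<noteq> {}}"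

datatype 'a fo =
    Less nat nat
  | Letter 'a nat
  | Neg "'a fo"
  | Conj "'a fo" "'a fo"
  | Ex nat "'a fo"

fun fv :: "'a fo \<Rightarrow> nat set" where
  "fv (Less x y) = {x, y}"
| "fv (Letter a x) = {x}"
| "fv (Neg \<phi>) = fv \<phi>"
| "fv (Conj \<phi> \<psi>) = fv \<phi> \<union> fv \<psi>"
| "fv (Ex v \<phi>) = fv \<phi> - {v}"

fun sat :: "'a word \<Rightarrow> (nat \<Rightarrow> nat) \<Rightarrow> 'a fo \<Rightarrow> bool" where
  "sat (r, w) \<sigma> (Less x y) = ((\<sigma> x, \<sigma> y) \<in> r \<and> \<sigma> x \<noteq> \<sigma> y)"
| "sat (r, w) \<sigma> (Letter a x) = (w (\<sigma> x) = a)"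
| "sat (r, w) \<sigma> (Neg \<phi>) = (\<not> sat (r, w) \<sigma> \<phi>)"
| "sat (r, w) \<sigma> (Conj \<phi> \<psi>) = (sat (r, w) \<sigma> \<phi> \<and> sat (r, w) \<sigma> \<psi>)"
| "sat (r, w) \<sigma> (Ex v \<phi>) = (\<exists>i\<in>Field r. sat (r, w) (\<sigma>(v := i)) \<phi>)"

definition fo_definable :: "'a word set \<Rightarrow> bool" where
  "fo_definable L \<longleftrightarrow> (\<exists>\<psi>. fv \<psi> = {} \<and> L = {u \<in> words. sat u (\<lambda>_. 0) \<psi>})"

definition fo_definable_map :: "'a word set \<Rightarrow> ('a word \<Rightarrow> 'x) \<Rightarrow> bool" where
  "fo_definable_map L f \<longleftrightarrow> (\<forall>x. fo_definable {u \<in> L. f u = x})"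

definition condensation :: "nat rel \<Rightarrow> nat rel \<Rightarrow> bool" where
  "condensation r E \<longleftrightarrow> equiv (Field r) E \<and>
     (\<forall>x y z. (x, y) \<in> E \<and> (x, z) \<in> r \<and> (z, y) \<in> r \<longrightarrow> (x, z) \<in> E)"

text \<open>Formula \<phi>(x,y) with x = variable 0, y = variable 1.\<close>

definition assign2 :: "nat \<Rightarrow> nat \<Rightarrow> nat \<Rightarrow> nat" where
  "assign2 i k = (\<lambda>v. if v = 0 then i else if v = 1 then k else i)"

definition fo_rel :: "'a fo \<Rightarrow> 'a word \<Rightarrow> nat rel" where
  "fo_rel \<phi> u = {(i, k). i \<in> dom_w u \<and> k \<in> dom_w u \<and> sat u (assign2 i k) \<phi>}"

definition condensation_formula :: "'a fo \<Rightarrow> bool" where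
  "condensation_formula \<phi> \<longleftrightarrow> fv \<phi> \<subseteq> {0, 1} \<and>
     (\<forall>u \<in> words. condensation (fst u) (fo_rel \<phi> u))"

text \<open>The induced map \<phi>-hat: the domain is the ordered set of classes, each class
being represented by its least element; the letter at a class is the subword
restricted to that class.\<close>

definition cls :: "'a fo \<Rightarrow> 'a word \<Rightarrow> nat \<Rightarrow> nat set" where
  "cls \<phi> u i = {k. (i, k) \<in> fo_rel \<phi> u}"

definition condense :: "'a fo \<Rightarrow> 'a word \<Rightarrow> ('a word) word" where
  "condense \<phi> u =
     (let M = {i \<in> dom_w u. \<forall>k \<in> cls \<phi> u i. (i, k) \<in> fst u}
      in (Restr (fst u) M, \<lambda>i. (Restr (fst u) (cls \<phi> u i), snd u)))"

definition map_word :: "('a \<Rightarrow> 'b) \<Rightarrow> 'a word \<Rightarrow> 'b word" where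
  "map_word f u = (fst u, f \<circ> snd u)"

end

theory Submission
  imports Defs
begin

text \<open>The condensed word \<open>w\<^sub>u\<close> is interpreted inside \<open>u\<close>: its positions are the least
elements of the \<open>\<phi>\<close>-classes, its order is the restriction of the order of \<open>u\<close>, and its letter
at a position \<open>i\<close> is \<open>f\<close> of the subword on the class of \<open>i\<close>, which is expressed by relativising
a sentence defining \<open>f\<close> to that class. Relativising a sentence defining \<open>g\<close> to the class
minima, with letter atoms replaced by these class formulas, yields a sentence over \<open>u\<close> that
holds exactly when \<open>g(w\<^sub>u)\<close> takes the prescribed value.\<close>

fun vars :: "'a fo \<Rightarrow> nat set" where
  "vars (Less x y) = {x, y}"
| "vars (Letter a x) = {x}"
| "vars (Neg \<chi>) = vars \<chi>"
| "vars (Conj \<chi> \<psi>) = vars \<chi> \<union> vars \<psi>"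
| "vars (Ex v \<chi>) = insert v (vars \<chi>)"

fun ren :: "(nat \<Rightarrow> nat) \<Rightarrow> 'a fo \<Rightarrow> 'a fo" where
  "ren \<rho> (Less x y) = Less (\<rho> x) (\<rho> y)"
| "ren \<rho> (Letter a x) = Letter a (\<rho> x)"
| "ren \<rho> (Neg \<chi>) = Neg (ren \<rho> \<chi>)"
| "ren \<rho> (Conj \<chi> \<psi>) = Conj (ren \<rho> \<chi>) (ren \<rho> \<psi>)"
| "ren \<rho> (Ex v \<chi>) = Ex (\<rho> v) (ren \<rho> \<chi>)"

lemma vars_ren: "vars (ren \<rho> \<chi>) = \<rho> ` vars \<chi>"
  by (induction \<chi>) auto

lemma fv_ren: "inj \<rho> \<Longrightarrow> fv (ren \<rho> \<chi>) = \<rho> ` fv \<chi>"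
  by (induction \<chi>) (auto simp: inj_eq)

lemma sat_ren: "inj \<rho> \<Longrightarrow> sat (r, w) \<sigma> (ren \<rho> \<chi>) = sat (r, w) (\<sigma> \<circ> \<rho>) \<chi>"
proof (induction \<chi> arbitrary: \<sigma>)
  case (Ex v \<chi>)
  have "\<And>i. (\<sigma>(\<rho> v := i)) \<circ> \<rho> = (\<sigma> \<circ> \<rho>)(v := i)"
    using Ex.prems by (auto simp: fun_eq_iff inj_eq)
  then show ?case
    using Ex by (simp only: sat.simps ren.simps)
qed auto

lemma sat_cong: "(\<forall>x\<in>fv \<chi>. \<sigma> x = \<sigma>' x) \<Longrightarrow> sat (r, w) \<sigma> \<chi> = sat (r, w) \<sigma>' \<chi>"
proof (induction \<chi> arbitrary: \<sigma> \<sigma>')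
  case (Ex v \<chi>)
  have "\<And>i. sat (r, w) (\<sigma>(v := i)) \<chi> = sat (r, w) (\<sigma>'(v := i)) \<chi>"
    using Ex by (intro Ex.IH) auto
  then show ?case by (simp del: fun_upd_apply)
next
  case (Conj \<chi>1 \<chi>2)
  then show ?case by (metis UnCI fv.simps(4) sat.simps(4))
qed auto

text \<open>Shifting all variables by 3 keeps 0 and 1 (used by \<open>\<phi>\<close>) and 2 (a class
representative) free for the formulas built around a shifted sentence.\<close>

definition shift :: "'a fo \<Rightarrow> 'a fo" where
  "shift = ren (\<lambda>n. n + 3)"

lemma vars_shift_ge: "v \<in> vars (shift \<chi>) \<Longrightarrow> 3 \<le> v"
  by (auto simp: shift_def vars_ren)

lemma fv_shift_closed: "fv \<chi> = {} \<Longrightarrow> fv (shift \<chi>) = {}"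
  by (simp add: shift_def fv_ren inj_def)

lemma sat_shift_closed: "fv \<chi> = {} \<Longrightarrow> sat (r, w) \<sigma> (shift \<chi>) = sat (r, w) (\<lambda>_. 0) \<chi>"
proof -
  assume "fv \<chi> = {}"
  then have "sat (r, w) (\<sigma> \<circ> (\<lambda>n. n + 3)) \<chi> = sat (r, w) (\<lambda>_. 0) \<chi>"
    by (intro sat_cong) simp
  then show ?thesis
    by (simp add: shift_def sat_ren inj_def)
qed

subsection \<open>Relativisation\<close>

fun relativize :: "(nat \<Rightarrow> 'a fo) \<Rightarrow> ('b \<Rightarrow> nat \<Rightarrow> 'a fo) \<Rightarrow> 'b fo \<Rightarrow> 'a fo" where
  "relativize G L (Less x y) = Less x y"
| "relativize G L (Letter b x) = L b x"
| "relativize G L (Neg \<chi>) = Neg (relativize G L \<chi>)"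
| "relativize G L (Conj \<chi> \<psi>) = Conj (relativize G L \<chi>) (relativize G L \<psi>)"
| "relativize G L (Ex v \<chi>) = Ex v (Conj (G v) (relativize G L \<chi>))"

lemma fv_relativize:
  assumes "\<And>v. fv (G v) \<subseteq> insert v Z" and "\<And>b x. fv (L b x) \<subseteq> insert x Z"
  shows "fv (relativize G L \<chi>) \<subseteq> fv \<chi> \<union> Z"
  using assms by (induction \<chi>) fastforce+

text \<open>The formulas \<open>G\<close> and \<open>L\<close> may refer to parameter variables \<open>P\<close>, which \<open>\<chi>\<close> never
rebinds, so they keep their values \<open>\<tau>\<close> throughout the evaluation.\<close>

lemma sat_relativize:
  assumes refl: "refl_on (Field r) r" and S: "S \<subseteq> Field r"
    and P: "P \<inter> vars \<chi> = {}"
    and G: "\<And>v \<sigma>. v \<in> vars \<chi> \<Longrightarrow> \<forall>p\<in>P. \<sigma> p = \<tau> p \<Longrightarrow> \<sigma> v \<in> Field r \<Longrightarrow>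
               sat (r, w) \<sigma> (G v) \<longleftrightarrow> \<sigma> v \<in> S"
    and L: "\<And>b x \<sigma>. x \<in> vars \<chi> \<Longrightarrow> \<forall>p\<in>P. \<sigma> p = \<tau> p \<Longrightarrow> \<sigma> x \<in> S \<Longrightarrow>
               sat (r, w) \<sigma> (L b x) \<longleftrightarrow> w' (\<sigma> x) = b"
    and \<sigma>: "\<forall>p\<in>P. \<sigma> p = \<tau> p" "\<forall>x\<in>fv \<chi>. \<sigma> x \<in> S"
  shows "sat (Restr r S, w') \<sigma> \<chi> \<longleftrightarrow> sat (r, w) \<sigma> (relativize G L \<chi>)"
  using P G L \<sigma>
proof (induction \<chi> arbitrary: \<sigma>)
  case (Less x y)
  then show ?case using S by auto
next
  case (Conj \<chi>1 \<chi>2)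
  have "sat (Restr r S, w') \<sigma> \<chi>1 \<longleftrightarrow> sat (r, w) \<sigma> (relativize G L \<chi>1)"
    by (rule Conj.IH(1)) (use Conj.prems in auto)
  moreover have "sat (Restr r S, w') \<sigma> \<chi>2 \<longleftrightarrow> sat (r, w) \<sigma> (relativize G L \<chi>2)"
    by (rule Conj.IH(2)) (use Conj.prems in auto)
  ultimately show ?case by simp
next
  case (Ex v \<chi>)
  have field: "Field (Restr r S) = S"
    using refl S by (rule Refl_Field_Restr2)
  have vP: "v \<notin> P" using Ex.prems by auto
  have IH: "sat (Restr r S, w') (\<sigma>(v:=i)) \<chi> \<longleftrightarrow> sat (r, w) (\<sigma>(v:=i)) (relativize G L \<chi>)"
    if "i \<in> S" for i
    by (rule Ex.IH) (use Ex.prems that vP in auto)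
  have dom: "sat (r, w) (\<sigma>(v:=i)) (G v) \<longleftrightarrow> i \<in> S" if "i \<in> Field r" for i
  proof -
    have "\<forall>p\<in>P. (\<sigma>(v:=i)) p = \<tau> p" "(\<sigma>(v:=i)) v \<in> Field r"
      using Ex.prems(4) vP that by auto
    from Ex.prems(2)[OF _ this] show ?thesis by (simp add: fun_upd_def)
  qed
  show ?case using field IH dom S by (auto simp del: fun_upd_apply)
qed auto

subsection \<open>Defining the condensed word inside the original word\<close>

definition eq_fo :: "nat \<Rightarrow> nat \<Rightarrow> 'a fo" where
  "eq_fo a b = Conj (Neg (Less a b)) (Neg (Less b a))"

definition cond_rel_fo :: "'a fo \<Rightarrow> nat \<Rightarrow> nat \<Rightarrow> 'a fo" where
  "cond_rel_fo \<phi> a b = Ex 0 (Conj (eq_fo 0 a) (Ex 1 (Conj (eq_fo 1 b) \<phi>)))"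

definition class_least_fo :: "'a fo \<Rightarrow> nat \<Rightarrow> 'a fo" where
  "class_least_fo \<phi> v = Neg (Ex 2 (Conj (cond_rel_fo \<phi> v 2) (Less 2 v)))"

definition class_letter_fo :: "'a fo \<Rightarrow> ('b \<Rightarrow> 'a fo) \<Rightarrow> 'b \<Rightarrow> nat \<Rightarrow> 'a fo" where
  "class_letter_fo \<phi> \<chi> b x =
     Ex 2 (Conj (eq_fo 2 x) (relativize (cond_rel_fo \<phi> 2) Letter (shift (\<chi> b))))"

definition condensed_fo :: "'a fo \<Rightarrow> ('b \<Rightarrow> 'a fo) \<Rightarrow> 'b fo \<Rightarrow> 'a fo" where
  "condensed_fo \<phi> \<chi> \<psi> = relativize (class_least_fo \<phi>) (class_letter_fo \<phi> \<chi>) (shift \<psi>)"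

lemma fv_cond_rel_fo: "fv \<phi> \<subseteq> {0, 1} \<Longrightarrow> fv (cond_rel_fo \<phi> a b) \<subseteq> {a, b}"
  by (auto simp: cond_rel_fo_def eq_fo_def)

lemma fv_class_least_fo: "fv \<phi> \<subseteq> {0, 1} \<Longrightarrow> fv (class_least_fo \<phi> v) \<subseteq> {v}"
  using fv_cond_rel_fo[of \<phi> v 2] by (auto simp: class_least_fo_def)

lemma fv_class_letter_fo:
  assumes "fv \<phi> \<subseteq> {0, 1}" and "fv (\<chi> b) = {}"
  shows "fv (class_letter_fo \<phi> \<chi> b x) \<subseteq> {x}"
proof -
  have "fv (relativize (cond_rel_fo \<phi> 2) Letter (shift (\<chi> b))) \<subseteq> fv (shift (\<chi> b)) \<union> {2}"
    by (rule fv_relativize) (use fv_cond_rel_fo[OF assms(1)] in auto)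
  then show ?thesis
    using fv_shift_closed[OF assms(2)] by (auto simp: class_letter_fo_def eq_fo_def)
qed

lemma fv_condensed_fo:
  assumes "fv \<phi> \<subseteq> {0, 1}" and "\<And>b. fv (\<chi> b) = {}" and "fv \<psi> = {}"
  shows "fv (condensed_fo \<phi> \<chi> \<psi>) = {}"
proof -
  have "fv (condensed_fo \<phi> \<chi> \<psi>) \<subseteq> fv (shift \<psi>) \<union> {}"
    unfolding condensed_fo_def
    by (rule fv_relativize) (use fv_class_least_fo[OF assms(1)] fv_class_letter_fo[of \<phi> \<chi>, OF assms(1,2)] in auto)
  then show ?thesis using fv_shift_closed[OF assms(3)] by simp
qed

locale condensed_word =
  fixes r :: "nat rel" and w :: "nat \<Rightarrow> 'a" and \<phi> :: "'a fo"
  assumes well_order: "Well_order r"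
    and fv_\<phi>: "fv \<phi> \<subseteq> {0, 1}"
    and condensation: "condensation r (fo_rel \<phi> (r, w))"
begin

abbreviation E :: "nat rel" where
  "E \<equiv> fo_rel \<phi> (r, w)"

definition least_elems :: "nat set" where
  "least_elems = {i \<in> dom_w (r, w). \<forall>k \<in> cls \<phi> (r, w) i. (i, k) \<in> r}"

lemma refl_on_Field: "refl_on (Field r) r"
  using well_order wo_rel.REFL wo_rel_def by blast

lemma in_order_iff_not_less:
  "i \<in> Field r \<Longrightarrow> k \<in> Field r \<Longrightarrow> (i, k) \<in> r \<longleftrightarrow> \<not> ((k, i) \<in> r \<and> k \<noteq> i)"
  using well_order by (metis wo_rel.ANTISYM wo_rel.TOTALS wo_rel_def antisymD)

lemma least_elems_subset: "least_elems \<subseteq> Field r"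
  by (auto simp: least_elems_def dom_w_def)

lemma fo_rel_subset: "E \<subseteq> Field r \<times> Field r"
  by (auto simp: fo_rel_def dom_w_def)

lemma cls_subset: "cls \<phi> (r, w) j \<subseteq> Field r"
  using fo_rel_subset by (auto simp: cls_def)

lemma in_own_cls: "j \<in> Field r \<Longrightarrow> j \<in> cls \<phi> (r, w) j"
  using condensation by (auto simp: condensation_def equiv_def refl_on_def cls_def)

lemma condense_eq:
  "map_word f (condense \<phi> (r, w)) = (Restr r least_elems, \<lambda>i. f (Restr r (cls \<phi> (r, w) i), w))"
  by (simp add: condense_def map_word_def least_elems_def Let_def comp_def)

lemma condensed_in_words: "map_word f (condense \<phi> (r, w)) \<in> words"
  using Well_order_Restr[OF well_order] by (simp add: condense_eq words_def is_word_def)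

lemma sat_eq_fo: "\<sigma> a \<in> Field r \<Longrightarrow> \<sigma> b \<in> Field r \<Longrightarrow> sat (r, w) \<sigma> (eq_fo a b) \<longleftrightarrow> \<sigma> a = \<sigma> b"
proof -
  assume "\<sigma> a \<in> Field r" "\<sigma> b \<in> Field r"
  then show ?thesis
    using in_order_iff_not_less[of "\<sigma> a" "\<sigma> b"] in_order_iff_not_less[of "\<sigma> b" "\<sigma> a"]
    by (auto simp: eq_fo_def)
qed

lemma sat_cond_rel_fo:
  assumes "a \<noteq> 0" "b \<noteq> 0" "b \<noteq> 1" "\<sigma> a \<in> Field r" "\<sigma> b \<in> Field r"
  shows "sat (r, w) \<sigma> (cond_rel_fo \<phi> a b) \<longleftrightarrow> (\<sigma> a, \<sigma> b) \<in> E"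
proof -
  have eq1: "sat (r, w) (\<sigma>(0 := i)) (eq_fo 0 a) \<longleftrightarrow> i = \<sigma> a" if "i \<in> Field r" for i
    using sat_eq_fo[of "\<sigma>(0 := i)" 0 a] assms that by simp
  have eq2: "sat (r, w) (\<sigma>(0 := i, 1 := k)) (eq_fo 1 b) \<longleftrightarrow> k = \<sigma> b" if "k \<in> Field r" for i k
    using sat_eq_fo[of "\<sigma>(0 := i, 1 := k)" 1 b] assms that by simp
  have \<phi>: "sat (r, w) (\<sigma>(0 := i, 1 := k)) \<phi> = sat (r, w) (assign2 i k) \<phi>" for i k
    by (rule sat_cong) (use fv_\<phi> in \<open>auto simp: assign2_def\<close>)
  have "sat (r, w) \<sigma> (cond_rel_fo \<phi> a b) \<longleftrightarrow>
     (\<exists>i\<in>Field r. sat (r, w) (\<sigma>(0 := i)) (eq_fo 0 a) \<and>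
        (\<exists>k\<in>Field r. sat (r, w) (\<sigma>(0 := i, 1 := k)) (eq_fo 1 b) \<and> sat (r, w) (\<sigma>(0 := i, 1 := k)) \<phi>))"
    by (simp add: cond_rel_fo_def del: fun_upd_apply)
  also have "\<dots> \<longleftrightarrow> sat (r, w) (assign2 (\<sigma> a) (\<sigma> b)) \<phi>"
    using eq1 eq2 \<phi> assms by (auto simp del: fun_upd_apply)
  also have "\<dots> \<longleftrightarrow> (\<sigma> a, \<sigma> b) \<in> E"
    using assms by (simp add: fo_rel_def dom_w_def)
  finally show ?thesis .
qed

lemma sat_class_least_fo:
  assumes "3 \<le> v" "\<sigma> v \<in> Field r"
  shows "sat (r, w) \<sigma> (class_least_fo \<phi> v) \<longleftrightarrow> \<sigma> v \<in> least_elems"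
proof -
  have rel: "sat (r, w) (\<sigma>(2 := k)) (cond_rel_fo \<phi> v 2) \<longleftrightarrow> (\<sigma> v, k) \<in> E" if "k \<in> Field r" for k
    using sat_cond_rel_fo[of v 2 "\<sigma>(2 := k)"] assms that by simp
  have less: "sat (r, w) (\<sigma>(2 := k)) (Less 2 v) \<longleftrightarrow> (k, \<sigma> v) \<in> r \<and> k \<noteq> \<sigma> v" for k
    using assms by simp
  have "sat (r, w) \<sigma> (class_least_fo \<phi> v) \<longleftrightarrow>
      \<not> (\<exists>k\<in>Field r. sat (r, w) (\<sigma>(2 := k)) (cond_rel_fo \<phi> v 2) \<and> sat (r, w) (\<sigma>(2 := k)) (Less 2 v))"
    by (simp add: class_least_fo_def del: fun_upd_apply sat.simps(1))
  also have "\<dots> \<longleftrightarrow> (\<forall>k\<in>Field r. (\<sigma> v, k) \<in> E \<longrightarrow> \<not> ((k, \<sigma> v) \<in> r \<and> k \<noteq> \<sigma> v))"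
    using rel less by blast
  also have "\<dots> \<longleftrightarrow> (\<forall>k. (\<sigma> v, k) \<in> E \<longrightarrow> (\<sigma> v, k) \<in> r)"
    using in_order_iff_not_less[OF assms(2)] fo_rel_subset by blast
  also have "\<dots> \<longleftrightarrow> \<sigma> v \<in> least_elems"
    using assms(2) by (simp add: least_elems_def cls_def dom_w_def)
  finally show ?thesis .
qed

lemma sat_class_letter_fo:
  assumes x: "x \<noteq> 2" "\<sigma> x \<in> Field r"
    and closed: "fv (\<chi> b) = {}"
    and defines_f: "{u \<in> words_ne. f u = b} = {u \<in> words. sat u (\<lambda>_. 0) (\<chi> b)}"
  shows "sat (r, w) \<sigma> (class_letter_fo \<phi> \<chi> b x) \<longleftrightarrow> f (Restr r (cls \<phi> (r, w) (\<sigma> x)), w) = b"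
proof -
  define j where "j = \<sigma> x"
  define C where "C = cls \<phi> (r, w) j"
  let ?R = "relativize (cond_rel_fo \<phi> 2) Letter (shift (\<chi> b))"
  have eq: "sat (r, w) (\<sigma>(2 := i)) (eq_fo 2 x) \<longleftrightarrow> i = j" if "i \<in> Field r" for i
    using sat_eq_fo[of "\<sigma>(2 := i)" 2 x] that x j_def by simp
  have "sat (r, w) \<sigma> (class_letter_fo \<phi> \<chi> b x) \<longleftrightarrow> sat (r, w) (\<sigma>(2 := j)) ?R"
    using eq x j_def by (auto simp: class_letter_fo_def simp del: fun_upd_apply)
  also have "\<dots> \<longleftrightarrow> sat (Restr r C, w) (\<sigma>(2 := j)) (shift (\<chi> b))"
  proof (rule sat_relativize[symmetric, where P = "{2}" and \<tau> = "\<lambda>_. j"])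
    show "sat (r, w) \<sigma>' (cond_rel_fo \<phi> 2 v) \<longleftrightarrow> \<sigma>' v \<in> C"
      if "v \<in> vars (shift (\<chi> b))" "\<forall>p\<in>{2}. \<sigma>' p = j" "\<sigma>' v \<in> Field r" for v \<sigma>'
      using vars_shift_ge[OF that(1)] sat_cond_rel_fo[of 2 v \<sigma>'] that x j_def
      by (simp add: C_def cls_def)
  qed (use refl_on_Field cls_subset vars_shift_ge[of 2 "\<chi> b"] fv_shift_closed[OF closed] in \<open>auto simp: C_def\<close>)
  also have "\<dots> \<longleftrightarrow> sat (Restr r C, w) (\<lambda>_. 0) (\<chi> b)"
    using sat_shift_closed[OF closed] by blast
  also have "\<dots> \<longleftrightarrow> f (Restr r C, w) = b"
  proof -
    have "Field (Restr r C) = C"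
      using refl_on_Field cls_subset C_def by (simp add: Refl_Field_Restr2)
    then have "(Restr r C, w) \<in> words_ne" "(Restr r C, w) \<in> words"
      using in_own_cls[of j] x j_def Well_order_Restr[OF well_order, of C]
      by (auto simp: words_ne_def words_def is_word_def dom_w_def C_def)
    then show ?thesis using defines_f by blast
  qed
  finally show ?thesis by (simp add: C_def j_def)
qed

lemma sat_condensed_fo:
  assumes closed_\<chi>: "\<And>b. fv (\<chi> b) = {}"
    and defines_f: "\<And>b. {u \<in> words_ne. f u = b} = {u \<in> words. sat u (\<lambda>_. 0) (\<chi> b)}"
    and closed_\<psi>: "fv \<psi> = {}"
  shows "sat (r, w) \<sigma> (condensed_fo \<phi> \<chi> \<psi>) \<longleftrightarrow> sat (map_word f (condense \<phi> (r, w))) (\<lambda>_. 0) \<psi>"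
proof -
  let ?w' = "\<lambda>i. f (Restr r (cls \<phi> (r, w) i), w)"
  have "sat (r, w) \<sigma> (condensed_fo \<phi> \<chi> \<psi>) \<longleftrightarrow> sat (Restr r least_elems, ?w') \<sigma> (shift \<psi>)"
    unfolding condensed_fo_def
  proof (rule sat_relativize[symmetric, where P = "{}"])
    show "sat (r, w) \<sigma>' (class_least_fo \<phi> v) \<longleftrightarrow> \<sigma>' v \<in> least_elems"
      if "v \<in> vars (shift \<psi>)" "\<sigma>' v \<in> Field r" for v \<sigma>'
      using vars_shift_ge[OF that(1)] that(2) by (rule sat_class_least_fo)
    show "sat (r, w) \<sigma>' (class_letter_fo \<phi> \<chi> b x) \<longleftrightarrow> ?w' (\<sigma>' x) = b"
      if "x \<in> vars (shift \<psi>)" "\<sigma>' x \<in> least_elems" for b x \<sigma>'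
      using vars_shift_ge[OF that(1)] that(2) least_elems_subset
        sat_class_letter_fo[of x \<sigma>' \<chi> b, OF _ _ closed_\<chi> defines_f]
      by auto
  qed (use refl_on_Field least_elems_subset fv_shift_closed[OF closed_\<psi>] in auto)
  also have "\<dots> \<longleftrightarrow> sat (map_word f (condense \<phi> (r, w))) (\<lambda>_. 0) \<psi>"
    using sat_shift_closed[OF closed_\<psi>] by (simp add: condense_eq)
  finally show ?thesis .
qed

end

lemma fo_definable_mapE:
  assumes "fo_definable_map L f"
  obtains \<chi> where "\<And>b. fv (\<chi> b) = {}" "\<And>b. {u \<in> L. f u = b} = {u \<in> words. sat u (\<lambda>_. 0) (\<chi> b)}"
proof -
  have "\<forall>b. \<exists>\<chi>. fv \<chi> = {} \<and> {u \<in> L. f u = b} = {u \<in> words. sat u (\<lambda>_. 0) \<chi>}"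
    using assms unfolding fo_definable_map_def fo_definable_def .
  then obtain \<chi> where "\<forall>b. fv (\<chi> b) = {} \<and> {u \<in> L. f u = b} = {u \<in> words. sat u (\<lambda>_. 0) (\<chi> b)}"
    by (rule choice[THEN exE])
  then show thesis by (intro that) simp_all
qed

theorem lemma2p1:
  fixes \<phi> :: "('a::finite) fo"
    and f :: "'a word \<Rightarrow> ('b::finite)"
    and g :: "'b word \<Rightarrow> ('c::finite)"
  assumes "condensation_formula \<phi>"
    and "fo_definable_map words_ne f"
    and "fo_definable_map words g"
  shows "fo_definable_map words (\<lambda>u. g (map_word f (condense \<phi> u)))"
proof -
  have fv_\<phi>: "fv \<phi> \<subseteq> {0, 1}" and cond: "\<And>r w. (r, w) \<in> words \<Longrightarrow> condensation r (fo_rel \<phi> (r, w))"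
    using assms(1) by (auto simp: condensation_formula_def)
  obtain \<chi> where \<chi>: "\<And>b. fv (\<chi> b) = {}" "\<And>b. {u \<in> words_ne. f u = b} = {u \<in> words. sat u (\<lambda>_. 0) (\<chi> b)}"
    by (rule fo_definable_mapE[OF assms(2)], blast)
  obtain \<psi> where \<psi>: "\<And>c. fv (\<psi> c) = {}" "\<And>c. {u \<in> words. g u = c} = {u \<in> words. sat u (\<lambda>_. 0) (\<psi> c)}"
    by (rule fo_definable_mapE[OF assms(3)], blast)
  have "{u \<in> words. g (map_word f (condense \<phi> u)) = c} = {u \<in> words. sat u (\<lambda>_. 0) (condensed_fo \<phi> \<chi> (\<psi> c))}"
    for c
  proof (intro Collect_cong conj_cong refl)
    fix u :: "'a word" assume "u \<in> words"
    moreover obtain r w where u: "u = (r, w)" by fastforce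
    ultimately interpret condensed_word r w \<phi>
      using fv_\<phi> cond by unfold_locales (auto simp: words_def is_word_def)
    show "g (map_word f (condense \<phi> u)) = c \<longleftrightarrow> sat u (\<lambda>_. 0) (condensed_fo \<phi> \<chi> (\<psi> c))"
      using \<psi>(2)[of c] condensed_in_words sat_condensed_fo[OF \<chi> \<psi>(1)] u by blast
  qed
  then show ?thesis
    using fv_condensed_fo[of \<phi> \<chi>, OF fv_\<phi> \<chi>(1) \<psi>(1)]
    unfolding fo_definable_map_def fo_definable_def by blast
qed

end
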